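(* Let $d\in\mathbb{N}$, $1\le q\le p\le\infty$, and $\mathbf N=(N_1,\dots,N_d)\in\mathbb{N}_0^d$. There is a constant $c(d)>0$ such that for every $m\in\mathbb{N}$ with $m\le\vartheta(\mathbf N)/2$, $$\varrho_m^o(\mathcal{T}(2\mathbf N,d)_q,L_p)\ge c(d)\,\vartheta(\mathbf N)^{1/q-1/p}.$$
   Context: Here $\Omega=\mathbb{T}^d=[0,2\pi)^d$ with $\mu$ the normalized Lebesgue measure and $L_p=L_p(\mathbb{T}^d,\mu)$. $\mathcal{T}(\mathbf N,d)$ is the space of trigonometric polynomials $\sum_{\mathbf k\in\mathbb{Z}^d:|k_j|\le N_j,\,j=1,\dots,d}c_{\mathbf k}e^{i(\mathbf k,\mathbf x)}$, $\vartheta(\mathbf N)=\prod_{j=1}^d(2N_j+1)$, $2\mathbf N=(2N_1,\dots,2N_d)$, and $\mathcal{T}(\mathbf N,d)_q$ is the unit ball of $\mathcal{T}(\mathbf N,d)$ in $L_q$. For a class $\mathbf F\subset\mathcal{C}(\Omega)$, $$\varrho_m^o(\mathbf F,L_p)=\inf_{\xi}\inf_{\mathcal M}\sup_{f\in\mathbf F}\|f-\mathcal M(f(\xi^1),\dots,f(\xi^m))\|_p,$$ where $\xi$ ranges over all sets of $m$ points $\{\xi^1,\dots,\xi^m\}\subset\Omega$ and $\mathcal M$ over all (arbitrary, possibly nonlinear) mappings $\mathbb{C}^m\to L_p(\Omega,\mu)$. *)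

theory Defs
  imports "HOL-Analysis.Analysis" "HOL-Probability.Essential_Supremum"
begin

text \<open>The torus T^d, represented by the fundamental cube [0,2 pi)^d in real^'d;
  the dimension d is CARD('d).\<close>
definition torus :: "(real^'d) set" where
  "torus = {x. \<forall>j. 0 \<le> x$j \<and> x$j < 2 * pi}"

definition torus_measure :: "(real^'d) measure" where
  "torus_measure = uniform_measure lborel torus"

definition Lp_norm :: "ereal \<Rightarrow> (real^'d \<Rightarrow> complex) \<Rightarrow> ereal" where
  "Lp_norm p f =
     (if p = \<infinity> then esssup torus_measure (\<lambda>x. ereal (norm (f x)))
      else (let I = (\<integral>\<^sup>+ x. ennreal (norm (f x) powr real_of_ereal p) \<partial>torus_measure)
            in if I = \<infinity> then \<infinity> else ereal (enn2real I powr (1 / real_of_ereal p))))"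

definition Lp_space :: "ereal \<Rightarrow> (real^'d \<Rightarrow> complex) set" where
  "Lp_space p = {g. g \<in> borel_measurable torus_measure \<and> Lp_norm p g < \<infinity>}"

definition freqs :: "('d \<Rightarrow> nat) \<Rightarrow> ('d \<Rightarrow> int) set" where
  "freqs N = {k. \<forall>j. \<bar>k j\<bar> \<le> int (N j)}"

definition trig_poly :: "('d::finite \<Rightarrow> nat) \<Rightarrow> (real^'d \<Rightarrow> complex) set" where
  "trig_poly N = {f. \<exists>c :: ('d \<Rightarrow> int) \<Rightarrow> complex.
      f = (\<lambda>x. \<Sum>k\<in>freqs N. c k * cis (\<Sum>j\<in>UNIV. of_int (k j) * x$j))}"

definition trig_poly_ball :: "('d::finite \<Rightarrow> nat) \<Rightarrow> ereal \<Rightarrow> (real^'d \<Rightarrow> complex) set" where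
  "trig_poly_ball N q = {f \<in> trig_poly N. Lp_norm q f \<le> 1}"

definition vartheta :: "('d::finite \<Rightarrow> nat) \<Rightarrow> nat" where
  "vartheta N = (\<Prod>j\<in>UNIV. 2 * N j + 1)"

definition optimal_recovery ::
    "nat \<Rightarrow> (real^'d \<Rightarrow> complex) set \<Rightarrow> ereal \<Rightarrow> ereal" where
  "optimal_recovery m F p =
     (INF \<xi> \<in> {\<xi>. length \<xi> = m \<and> distinct \<xi> \<and> set \<xi> \<subseteq> torus}.
        INF M \<in> {M :: complex list \<Rightarrow> (real^'d \<Rightarrow> complex). \<forall>v. M v \<in> Lp_space p}.
          SUP f \<in> F. Lp_norm p (\<lambda>x. f x - M (map f \<xi>) x))"

definition recip :: "ereal \<Rightarrow> real" where
  "recip p = (if p = \<infinity> then 0 else 1 / real_of_ereal p)"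

end

theory Submission
  imports Defs
begin

(* Fix nodes xi_1, ..., xi_m with m <= theta(N)/2. On coefficient vectors indexed by freqs N,
   evaluation at x is the Hermitian inner product with the conjugated characters w(x).
   Orthonormalising the w(xi_i) gives an orthonormal family U with card U <= m, and the squared
   length of the projection of w(x) onto span U has mean card U over the torus; so at some x0 it is
   at most m, while |w(x0)|^2 = theta(N). The residual a of w(x0) is orthogonal to every w(xi_i),
   so g = sum a_k e_k lies in T(N), vanishes at the nodes and has g(x0) = |a|^2 >= theta(N)/2.
   Controlling the coefficients, |g| >= |a|^2/2 on a box of measure c(d)/theta(N) around x0.
   Then f = |g|^2 / (theta^(1-1/q) |a|^2) lies in T(2N), has L_q norm at most 1 by interpolation
   between its sup norm and its L_1 norm (Parseval), and is at least theta^(1/q)/8 on the box.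
   Since f and -f have the same samples, every recovery method errs by theta^(1/q)/8 on half of the
   box for one of them, which gives the bound c(d) theta^(1/q - 1/p). *)

section \<open>Integration on the torus\<close>

lemma integral_lborel_prod_Basis:
  fixes f :: "'a::euclidean_space \<Rightarrow> real \<Rightarrow> complex"
  assumes int: "\<And>b. b \<in> Basis \<Longrightarrow> integrable lborel (f b)"
  shows "(\<integral>x. (\<Prod>b\<in>Basis. f b (x \<bullet> b)) \<partial>(lborel::'a measure)) = (\<Prod>b\<in>Basis. \<integral>x. f b x \<partial>lborel)"
proof -
  interpret finite_product_sigma_finite "\<lambda>_. lborel" "Basis::'a set"
    proof qed simp
  have meas[measurable]: "\<And>b. b \<in> Basis \<Longrightarrow> f b \<in> borel_measurable borel"
    using int by (auto dest: borel_measurable_integrable)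
  have mg: "(\<lambda>g. \<Sum>b\<in>Basis. g b *\<^sub>R b) \<in> measurable (\<Pi>\<^sub>M b\<in>(Basis::'a set). lborel) (borel::'a measure)"
    by measurable
  have "(\<integral>x. (\<Prod>b\<in>Basis. f b (x \<bullet> b)) \<partial>(lborel::'a measure)) =
     (\<integral>g. (\<Prod>b\<in>Basis. f b ((\<Sum>b'\<in>Basis. g b' *\<^sub>R b') \<bullet> b)) \<partial>(\<Pi>\<^sub>M b\<in>(Basis::'a set). lborel))"
    by (subst lborel_eq, rule integral_distr[OF mg]) measurable
  also have "\<dots> = (\<integral>g. (\<Prod>b\<in>Basis. f b (g b)) \<partial>(\<Pi>\<^sub>M b\<in>(Basis::'a set). lborel))"
    by (intro Bochner_Integration.integral_cong prod.cong refl)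
       (simp add: inner_sum_left inner_Basis if_distrib cong: if_cong)
  also have "\<dots> = (\<Prod>b\<in>Basis. \<integral>x. f b x \<partial>lborel)"
    by (rule product_integral_prod) (auto intro: int)
  finally show ?thesis .
qed

lemma cis_has_vector_derivative:
  "((\<lambda>t::real. cis (r * t)) has_vector_derivative (cis (r * t) * (\<i> * of_real r))) (at t within S)"
proof -
  have "\<And>t. exp (t *\<^sub>R (\<i> * of_real r)) = cis (r * t)"
    by (simp add: cis_conv_exp scaleR_conv_of_real algebra_simps)
  then show ?thesis
    using exp_scaleR_has_vector_derivative_right[where t=t and A="\<i> * of_real r" and T=S] by simp
qed

lemma integral_cis_int_mult:
  fixes r :: int
  shows "(\<integral>t. indicator {0..2*pi} t *\<^sub>R cis (of_int r * t) \<partial>lborel) = (if r = 0 then 2*pi else 0)"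
proof (cases "r = 0")
  case False
  have "(\<integral>t. indicator {0..2*pi} t *\<^sub>R cis (of_int r * t) \<partial>lborel)
     = cis (of_int r * (2*pi)) / (\<i> * of_int r) - cis (of_int r * 0) / (\<i> * of_int r)"
  proof (rule integral_FTC_atLeastAtMost)
    fix x :: real
    show "((\<lambda>t. cis (of_int r * t) / (\<i> * of_int r)) has_vector_derivative cis (of_int r * x))
        (at x within {0..2*pi})"
      using has_vector_derivative_divide[OF cis_has_vector_derivative[of "of_int r" x "{0..2*pi}"],
          where a="\<i> * of_int r"] False
      by simp
  qed (auto intro!: continuous_intros)
  moreover have "cis (of_int r * (2*pi)) = 1"
    using cis_multiple_2pi[of "of_int r"] by (simp add: mult.commute)
  ultimately show ?thesis using False by simp
qed (simp add: scaleR_conv_of_real)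

lemma Basis_cart: "(Basis :: (real^'n::finite) set) = range (\<lambda>j. axis j 1)"
  by (auto simp: Basis_vec_def)

lemma prod_Basis_cart: "(\<Prod>b\<in>(Basis :: (real^'n::finite) set). f b) = (\<Prod>j\<in>UNIV. f (axis j 1))"
proof -
  have "inj (\<lambda>j::'n. axis j (1::real))" by (auto simp: inj_on_def axis_eq_axis)
  then show ?thesis unfolding Basis_cart by (simp add: prod.reindex)
qed

lemma emeasure_lborel_cbox_cart:
  fixes l u :: "real^'n::finite"
  assumes "\<And>j. l$j \<le> u$j"
  shows "emeasure lborel (cbox l u) = ennreal (\<Prod>j\<in>UNIV. u$j - l$j)"
proof -
  have "\<forall>b\<in>Basis. l \<bullet> b \<le> u \<bullet> b"
    using assms by (auto simp: Basis_cart cart_eq_inner_axis[symmetric])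
  then show ?thesis
    by (simp add: emeasure_lborel_cbox_eq prod_Basis_cart cart_eq_inner_axis[symmetric] inner_diff_left)
qed

lemma emeasure_lborel_box_cart:
  fixes l u :: "real^'n::finite"
  assumes "\<And>j. l$j \<le> u$j"
  shows "emeasure lborel (box l u) = ennreal (\<Prod>j\<in>UNIV. u$j - l$j)"
proof -
  have "\<forall>b\<in>Basis. l \<bullet> b \<le> u \<bullet> b"
    using assms by (auto simp: Basis_cart cart_eq_inner_axis[symmetric])
  then show ?thesis
    by (simp add: emeasure_lborel_box_eq prod_Basis_cart cart_eq_inner_axis[symmetric] inner_diff_left)
qed

lemma torus_sets[measurable]: "torus \<in> sets (borel :: (real^'d::finite) measure)"
proof -
  have "torus = {x \<in> space (borel :: (real^'d) measure). \<forall>j. 0 \<le> x$j \<and> x$j < 2 * pi}"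
    by (simp add: torus_def)
  also have "\<dots> \<in> sets borel" by measurable
  finally show ?thesis .
qed

lemma emeasure_lborel_torus: "emeasure lborel (torus :: (real^'d::finite) set) = ennreal ((2*pi)^CARD('d))"
proof (rule antisym)
  have "torus \<subseteq> cbox (0::real^'d) (\<chi> j. 2*pi)"
    by (auto simp: torus_def mem_box_cart less_imp_le)
  then have "emeasure lborel (torus :: (real^'d) set) \<le> emeasure lborel (cbox (0::real^'d) (\<chi> j. 2*pi))"
    by (intro emeasure_mono) auto
  then show "emeasure lborel (torus :: (real^'d) set) \<le> ennreal ((2*pi)^CARD('d))"
    by (subst (asm) emeasure_lborel_cbox_cart) auto
next
  have "box (0::real^'d) (\<chi> j. 2*pi) \<subseteq> torus"
    by (auto simp: torus_def mem_box_cart less_imp_le)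
  then have "emeasure lborel (box (0::real^'d) (\<chi> j. 2*pi)) \<le> emeasure lborel (torus :: (real^'d) set)"
    by (intro emeasure_mono) auto
  then show "ennreal ((2*pi)^CARD('d)) \<le> emeasure lborel (torus :: (real^'d) set)"
    by (subst (asm) emeasure_lborel_box_cart) auto
qed

lemma space_torus_measure[simp]: "space torus_measure = UNIV"
  by (simp add: torus_measure_def)

lemma sets_torus_measure[simp, measurable_cong]:
  "sets (torus_measure :: (real^'d::finite) measure) = sets borel"
  by (simp add: torus_measure_def)

lemma emeasure_torus_measure:
  "E \<in> sets borel \<Longrightarrow> emeasure (torus_measure :: (real^'d::finite) measure) E =
     emeasure lborel (torus \<inter> E) / ennreal ((2*pi)^CARD('d))"
  unfolding torus_measure_def by (subst emeasure_uniform_measure) (auto simp: emeasure_lborel_torus)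

lemma emeasure_torus_measure_UNIV[simp]: "emeasure (torus_measure :: (real^'d::finite) measure) UNIV = 1"
  by (simp add: emeasure_torus_measure emeasure_lborel_torus divide_ennreal)

lemma measure_torus_measure_UNIV[simp]: "measure (torus_measure :: (real^'d::finite) measure) UNIV = 1"
  by (simp add: measure_def)

lemma finite_measure_torus_measure: "finite_measure (torus_measure :: (real^'d::finite) measure)"
  by (rule finite_measureI) simp

interpretation torus: finite_measure "torus_measure :: (real^'d::finite) measure"
  by (rule finite_measure_torus_measure)

lemma AE_torus_measure_in_torus: "AE x in (torus_measure :: (real^'d::finite) measure). x \<in> torus"
  unfolding torus_measure_def by (rule AE_uniform_measureI) auto

lemma torus_measure_density:
  "(torus_measure :: (real^'d::finite) measure) =
     density lborel (\<lambda>x. ennreal (indicator torus x / (2*pi)^CARD('d)))"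
proof -
  have "1 / ennreal ((2*pi)^CARD('d)) = ennreal (1 / (2*pi)^CARD('d))"
    using divide_ennreal[of 1 "(2*pi)^CARD('d)"] by simp
  then show ?thesis
    unfolding torus_measure_def uniform_measure_def emeasure_lborel_torus
    by (intro density_cong) (auto split: split_indicator)
qed

lemma integral_torus_measure:
  fixes f :: "real^'d::finite \<Rightarrow> complex"
  assumes [measurable]: "f \<in> borel_measurable borel"
  shows "(\<integral>x. f x \<partial>torus_measure) = (\<integral>x. indicator torus x * f x \<partial>lborel) / (2*pi)^CARD('d)"
proof -
  have "(\<integral>x. f x \<partial>torus_measure) = (\<integral>x. (indicator torus x / (2*pi)^CARD('d)) *\<^sub>R f x \<partial>lborel)"
    unfolding torus_measure_density by (subst integral_density) auto
  also have "\<dots> = (\<integral>x. (indicator torus x * f x) / (2*pi)^CARD('d) \<partial>lborel)"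
    by (intro Bochner_Integration.integral_cong) (auto simp: scaleR_conv_of_real split: split_indicator)
  finally show ?thesis by simp
qed

definition torus_char :: "('d::finite \<Rightarrow> int) \<Rightarrow> real^'d \<Rightarrow> complex" where
  "torus_char k x = cis (\<Sum>j\<in>UNIV. of_int (k j) * x$j)"

lemma torus_char_measurable[measurable]: "torus_char k \<in> borel_measurable borel"
  unfolding torus_char_def by (intro borel_measurable_continuous_onI continuous_intros)

lemma norm_torus_char[simp]: "norm (torus_char k x) = 1"
  by (simp add: torus_char_def)

lemma torus_char_mult_cnj: "torus_char k x * cnj (torus_char l x) = torus_char (\<lambda>j. k j - l j) x"
  by (simp add: torus_char_def cis_cnj cis_mult sum_subtractf[symmetric] algebra_simps)

lemma cis_sum: "finite A \<Longrightarrow> cis (\<Sum>j\<in>A. f j) = (\<Prod>j\<in>A. cis (f j))"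
  by (induction A rule: finite_induct) (auto simp: cis_mult[symmetric])

lemma integral_lborel_torus_char:
  "(\<integral>x. indicator torus x * torus_char k x \<partial>(lborel :: (real^'d::finite) measure)) =
     (if k = (\<lambda>_. 0) then (2*pi)^CARD('d) else 0)"
proof -
  define g where "g j t = indicator {0..2*pi} t *\<^sub>R cis (of_int (k j) * t)" for j and t :: real
  define coord where "coord b = (SOME j. b = axis j (1::real))" for b :: "real^'d"
  have coord: "coord (axis j 1) = j" for j
    unfolding coord_def by (rule some_equality) (auto simp: axis_eq_axis)
  \<comment> \<open>the faces \<open>x$j = 2*pi\<close> are null sets, so the half-open torus may be replaced by a closed cube\<close>
  have ae: "AE x in lborel. (\<forall>j\<in>UNIV. (x::real^'d) $ j \<noteq> 2*pi)"
    by (intro AE_finite_allI) (auto simp: cart_eq_inner_axis Basis_cart intro!: AE_lborel_inner_neq)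
  have "(\<integral>x. indicator torus x * torus_char k x \<partial>(lborel :: (real^'d) measure)) =
        (\<integral>x. (\<Prod>b\<in>Basis. g (coord b) (x \<bullet> b)) \<partial>(lborel :: (real^'d) measure))"
  proof (rule integral_cong_AE)
    show "AE x in lborel. indicator torus x * torus_char k x = (\<Prod>b\<in>Basis. g (coord b) (x \<bullet> b))"
      using ae
    proof eventually_elim
      case (elim x)
      have "(\<Prod>b\<in>Basis. g (coord b) (x \<bullet> b)) = (\<Prod>j\<in>UNIV. g j (x $ j))"
        by (simp add: prod_Basis_cart coord cart_eq_inner_axis)
      also have "\<dots> = indicator torus x * torus_char k x"
      proof (cases "x \<in> torus")
        case True
        then have "\<And>j. x $ j \<in> {0..2*pi}" by (auto simp: torus_def less_imp_le)
        then show ?thesis using True by (simp add: g_def torus_char_def cis_sum)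
      next
        case False
        then obtain j where "x $ j \<notin> {0..2*pi}" using elim by (auto simp: torus_def less_le)
        then have "g j (x $ j) = 0" by (simp add: g_def)
        then show ?thesis using False by (auto intro: prod_zero)
      qed
      finally show ?case by simp
    qed
  qed (unfold g_def, measurable, auto intro!: borel_measurable_continuous_onI continuous_intros)
  also have "\<dots> = (\<Prod>b\<in>Basis. \<integral>t. g (coord b) t \<partial>lborel)"
    by (rule integral_lborel_prod_Basis)
       (auto simp: g_def intro!: borel_integrable_atLeastAtMost'[unfolded set_integrable_def] continuous_intros)
  also have "\<dots> = (\<Prod>j\<in>UNIV. if k j = 0 then 2*pi else 0)"
    by (simp add: prod_Basis_cart coord g_def integral_cis_int_mult)
  also have "\<dots> = (if k = (\<lambda>_. 0) then (2*pi)^CARD('d) else 0)"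
  proof (cases "k = (\<lambda>_. 0)")
    case False
    then obtain j where "k j \<noteq> 0" by auto
    then show ?thesis using False by (auto intro: prod_zero)
  qed simp
  finally show ?thesis .
qed

lemma integral_torus_char:
  "(\<integral>x. torus_char k x \<partial>(torus_measure :: (real^'d::finite) measure)) = (if k = (\<lambda>_. 0) then 1 else 0)"
  by (simp add: integral_torus_measure integral_lborel_torus_char)

lemma norm_sum_torus_char_le: "norm (\<Sum>k\<in>F. a k * torus_char k x) \<le> (\<Sum>k\<in>F. norm (a k))"
  by (rule order_trans[OF norm_sum]) (simp add: norm_mult)

lemma cmod_sum_torus_char_squared:
  "complex_of_real ((norm (\<Sum>k\<in>F. a k * torus_char k x))^2) =
      (\<Sum>k\<in>F. \<Sum>l\<in>F. a k * cnj (a l) * torus_char (\<lambda>j. k j - l j) x)"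
proof -
  have "complex_of_real ((norm (\<Sum>k\<in>F. a k * torus_char k x))^2) =
      (\<Sum>k\<in>F. a k * torus_char k x) * cnj (\<Sum>k\<in>F. a k * torus_char k x)"
    by (rule complex_norm_square)
  also have "\<dots> = (\<Sum>k\<in>F. \<Sum>l\<in>F. a k * cnj (a l) * (torus_char k x * cnj (torus_char l x)))"
    by (simp add: sum_distrib_left sum_distrib_right cnj_sum algebra_simps) (rule sum.swap)
  finally show ?thesis by (simp add: torus_char_mult_cnj)
qed

lemma integrable_torus_char_sum_squared:
  "integrable torus_measure (\<lambda>x::real^'d::finite. (norm (\<Sum>k\<in>F. a k * torus_char k x))^2)"
  by (rule torus.integrable_const_bound[where B="(\<Sum>k\<in>F. norm (a k))^2"])
     (auto intro!: power_mono norm_sum_torus_char_le)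

lemma parseval_torus:
  fixes a :: "('d::finite \<Rightarrow> int) \<Rightarrow> complex"
  assumes "finite F"
  shows "(\<integral>x. (norm (\<Sum>k\<in>F. a k * torus_char k x))^2 \<partial>(torus_measure :: (real^'d) measure)) =
    (\<Sum>k\<in>F. (norm (a k))^2)"
proof -
  have int: "integrable torus_measure (\<lambda>x::real^'d. c * torus_char k x)" for c k
    by (intro integrable_mult_right torus.integrable_const_bound[where B=1]) auto
  have "complex_of_real (\<integral>x. (norm (\<Sum>k\<in>F. a k * torus_char k x))^2 \<partial>(torus_measure :: (real^'d) measure))
     = (\<Sum>k\<in>F. \<Sum>l\<in>F. a k * cnj (a l) * (\<integral>x. torus_char (\<lambda>j. k j - l j) x \<partial>(torus_measure :: (real^'d) measure)))"
    by (simp only: integral_complex_of_real[symmetric] cmod_sum_torus_char_squared)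
       (simp add: int integrable_sum)
  also have "\<dots> = (\<Sum>k\<in>F. \<Sum>l\<in>F. if l = k then a k * cnj (a l) else 0)"
  proof (intro sum.cong refl)
    fix k l :: "'d \<Rightarrow> int"
    have "((\<lambda>j. k j - l j) = (\<lambda>_. 0)) = (l = k)" by (auto simp: fun_eq_iff)
    then show "a k * cnj (a l) * (\<integral>x. torus_char (\<lambda>j. k j - l j) x \<partial>(torus_measure :: (real^'d) measure))
        = (if l = k then a k * cnj (a l) else 0)"
      by (simp add: integral_torus_char)
  qed
  also have "\<dots> = complex_of_real (\<Sum>k\<in>F. (norm (a k))^2)"
    using assms by (simp add: complex_norm_square[symmetric])
  finally show ?thesis by (simp only: of_real_eq_iff)
qed

section \<open>Orthonormal families for the Hermitian form on coefficient vectors\<close>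

definition cinner_on :: "'k set \<Rightarrow> ('k \<Rightarrow> complex) \<Rightarrow> ('k \<Rightarrow> complex) \<Rightarrow> complex" where
  "cinner_on F u v = (\<Sum>k\<in>F. u k * cnj (v k))"

lemma cinner_on_commute: "cinner_on F v u = cnj (cinner_on F u v)"
  by (simp add: cinner_on_def cnj_sum mult.commute)

lemma cinner_on_diff_left: "cinner_on F (\<lambda>k. x k - y k) v = cinner_on F x v - cinner_on F y v"
  by (simp add: cinner_on_def algebra_simps sum_subtractf)

lemma cinner_on_diff_right: "cinner_on F v (\<lambda>k. x k - y k) = cinner_on F v x - cinner_on F v y"
  by (simp add: cinner_on_def algebra_simps sum_subtractf)

lemma cinner_on_scale_left: "cinner_on F (\<lambda>k. c * u k) v = c * cinner_on F u v"
  by (simp add: cinner_on_def sum_distrib_left mult_ac)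

lemma cinner_on_scale_right: "cinner_on F u (\<lambda>k. c * v k) = cnj c * cinner_on F u v"
  by (simp add: cinner_on_def sum_distrib_left mult_ac)

lemma cinner_on_sum_left:
  "finite U \<Longrightarrow> cinner_on F (\<lambda>k. \<Sum>u\<in>U. f u * u k) v = (\<Sum>u\<in>U. f u * cinner_on F u v)"
  by (simp add: cinner_on_def sum_distrib_left sum_distrib_right mult.assoc sum.swap[of _ F])

lemma cinner_on_sum_right:
  "finite U \<Longrightarrow> cinner_on F v (\<lambda>k. \<Sum>u\<in>U. f u * u k) = (\<Sum>u\<in>U. cnj (f u) * cinner_on F v u)"
  by (subst (1 2) cinner_on_commute) (simp add: cinner_on_sum_left cnj_sum)

lemma cinner_on_self: "cinner_on F u u = complex_of_real (\<Sum>k\<in>F. (norm (u k))^2)"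
  by (simp only: cinner_on_def of_real_sum complex_norm_square)

definition orthonormal_on :: "'k set \<Rightarrow> ('k \<Rightarrow> complex) set \<Rightarrow> bool" where
  "orthonormal_on F U \<longleftrightarrow> (\<forall>u\<in>U. \<forall>v\<in>U. cinner_on F u v = (if u = v then 1 else 0))"

lemma cinner_on_residual_orthogonal:
  assumes "finite U" "orthonormal_on F U" "u0 \<in> U"
  shows "cinner_on F (\<lambda>k. w k - (\<Sum>u\<in>U. cinner_on F w u * u k)) u0 = 0"
proof -
  have "(\<Sum>u\<in>U. cinner_on F w u * cinner_on F u u0) = (\<Sum>u\<in>U. if u = u0 then cinner_on F w u else 0)"
    using assms(2,3) by (intro sum.cong refl) (auto simp: orthonormal_on_def)
  then show ?thesis
    using assms(1,3) by (simp add: cinner_on_diff_left cinner_on_sum_left)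
qed

lemma cinner_on_residual:
  fixes F :: "'k set" and U :: "('k \<Rightarrow> complex) set" and w :: "'k \<Rightarrow> complex"
  assumes U: "finite U" "orthonormal_on F U"
  defines "a \<equiv> \<lambda>k. w k - (\<Sum>u\<in>U. cinner_on F w u * u k)"
  shows "cinner_on F a a = cinner_on F a w"
    and "cinner_on F a w = cinner_on F w w - (\<Sum>u\<in>U. cinner_on F w u * cnj (cinner_on F w u))"
proof -
  define P where "P = (\<lambda>k. \<Sum>u\<in>U. cinner_on F w u * u k)"
  have a: "a = (\<lambda>k. w k - P k)" by (simp add: a_def P_def)
  have "cinner_on F a u = 0" if "u \<in> U" for u
    unfolding a_def by (rule cinner_on_residual_orthogonal[OF U that])
  then have "cinner_on F a P = 0"
    unfolding P_def by (simp add: cinner_on_sum_right[OF U(1)])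
  then show "cinner_on F a a = cinner_on F a w"
    by (subst (2) a) (simp add: cinner_on_diff_right)
  have "cinner_on F P w = (\<Sum>u\<in>U. cinner_on F w u * cinner_on F u w)"
    unfolding P_def by (rule cinner_on_sum_left[OF U(1)])
  also have "\<dots> = (\<Sum>u\<in>U. cinner_on F w u * cnj (cinner_on F w u))"
    by (simp only: cinner_on_commute[of F _ w])
  finally show "cinner_on F a w = cinner_on F w w - (\<Sum>u\<in>U. cinner_on F w u * cnj (cinner_on F w u))"
    unfolding a by (simp add: cinner_on_diff_left)
qed

lemma orthonormal_on_extend:
  assumes "finite F" "finite U" "orthonormal_on F U"
  obtains U' where "finite U'" "card U' \<le> Suc (card U)" "orthonormal_on F U'" "U \<subseteq> U'"
    "\<And>a. \<forall>u\<in>U'. cinner_on F a u = 0 \<Longrightarrow> cinner_on F a c = 0"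
proof -
  define r where "r = (\<lambda>k. c k - (\<Sum>u\<in>U. cinner_on F c u * u k))"
  have r_orth: "cinner_on F r u = 0" if "u \<in> U" for u
    unfolding r_def by (rule cinner_on_residual_orthogonal[OF assms(2,3) that])
  have c_eq: "cinner_on F a c = cinner_on F a r" if "\<forall>u\<in>U. cinner_on F a u = 0" for a
    using that unfolding r_def by (simp only: cinner_on_diff_right cinner_on_sum_right[OF assms(2)]) simp
  show thesis
  proof (cases "\<forall>k\<in>F. r k = 0")
    case True
    then have "cinner_on F a r = 0" for a by (simp add: cinner_on_def)
    with c_eq show thesis by (intro that[of U]) (use assms in auto)
  next
    case False
    define nr where "nr = (\<Sum>k\<in>F. (norm (r k))^2)"
    have "nr > 0"
    proof -
      from False obtain k where "k \<in> F" "r k \<noteq> 0" by auto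
      then have "(norm (r k))^2 \<le> nr" "0 < (norm (r k))^2"
        unfolding nr_def using assms(1) by (auto intro!: member_le_sum)
      then show ?thesis by linarith
    qed
    define s where "s = (\<lambda>k. complex_of_real (1 / sqrt nr) * r k)"
    have r_s: "r = (\<lambda>k. complex_of_real (sqrt nr) * s k)"
      using \<open>nr > 0\<close> by (auto simp: s_def fun_eq_iff)
    have "cinner_on F r r = complex_of_real nr" by (simp add: cinner_on_self nr_def)
    then have ss: "cinner_on F s s = 1"
      unfolding s_def cinner_on_scale_left cinner_on_scale_right using \<open>nr > 0\<close>
      by (simp flip: of_real_mult)
    have su: "cinner_on F s u = 0" and us: "cinner_on F u s = 0" if "u \<in> U" for u
      using r_orth[OF that] cinner_on_commute[of F u s]
      by (simp_all only: s_def cinner_on_scale_left) simp_all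
    have "s \<notin> U" using su ss by force
    show thesis
    proof (rule that[of "insert s U"])
      show "card (insert s U) \<le> Suc (card U)" using assms(2) by (simp add: card_insert_le_m1)
      show "orthonormal_on F (insert s U)"
        using assms(3) ss su us by (auto simp: orthonormal_on_def)
      fix a assume a: "\<forall>u\<in>insert s U. cinner_on F a u = 0"
      have "cinner_on F a r = 0"
        using a by (simp add: r_s cinner_on_scale_right)
      then show "cinner_on F a c = 0" using c_eq a by simp
    qed (use assms in auto)
  qed
qed

lemma gram_schmidt_cinner_on:
  assumes "finite F"
  obtains U where "finite U" "card U \<le> length cs" "orthonormal_on F U"
    "\<And>a. \<forall>u\<in>U. cinner_on F a u = 0 \<Longrightarrow> \<forall>c\<in>set cs. cinner_on F a c = 0"
proof (induction cs arbitrary: thesis)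
  case Nil
  show ?case by (rule Nil[of "{}"]) (auto simp: orthonormal_on_def)
next
  case (Cons c cs)
  obtain U where U: "finite U" "card U \<le> length cs" "orthonormal_on F U"
    "\<And>a. \<forall>u\<in>U. cinner_on F a u = 0 \<Longrightarrow> \<forall>c\<in>set cs. cinner_on F a c = 0"
    using Cons.IH by blast
  obtain U' where U': "finite U'" "card U' \<le> Suc (card U)" "orthonormal_on F U'" "U \<subseteq> U'"
    "\<And>a. \<forall>u\<in>U'. cinner_on F a u = 0 \<Longrightarrow> cinner_on F a c = 0"
    using orthonormal_on_extend[OF assms U(1,3)] by blast
  show ?case
  proof (rule Cons.prems[OF U'(1) _ U'(3)])
    show "card U' \<le> length (c # cs)" using U(2) U'(2) by simp
    fix a assume "\<forall>u\<in>U'. cinner_on F a u = 0"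
    then show "\<forall>c'\<in>set (c # cs). cinner_on F a c' = 0"
      using U(4)[of a] U'(4) U'(5)[of a] by auto
  qed
qed

section \<open>A polynomial in T(N) vanishing at the nodes with a large peak\<close>

lemma freqs_eq_PiE: "freqs N = PiE UNIV (\<lambda>j. {- int (N j) .. int (N j)})"
  by (auto simp: freqs_def PiE_def extensional_def Pi_def abs_le_iff) (metis minus_le_iff)+

lemma finite_freqs[simp]: "finite (freqs (N :: 'd::finite \<Rightarrow> nat))"
  unfolding freqs_eq_PiE by (rule finite_PiE) auto

lemma card_freqs: "card (freqs (N :: 'd::finite \<Rightarrow> nat)) = vartheta N"
proof -
  have "card (freqs N) = (\<Prod>j\<in>UNIV. card {- int (N j) .. int (N j)})"
    unfolding freqs_eq_PiE by (rule card_PiE) auto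
  also have "\<dots> = vartheta N"
    unfolding vartheta_def by (intro prod.cong refl) auto
  finally show ?thesis .
qed

lemma vartheta_pos: "vartheta N > 0"
  by (simp add: vartheta_def)

lemma diff_mem_freqs_double:
  "k \<in> freqs N \<Longrightarrow> l \<in> freqs N \<Longrightarrow> (\<lambda>j. k j - l j) \<in> freqs (\<lambda>j. 2 * N j)"
  by (auto simp: freqs_def abs_le_iff) (smt (verit))+

lemma scaled_norm_square_in_trig_poly:
  fixes a :: "('d::finite \<Rightarrow> int) \<Rightarrow> complex" and C :: real
  shows "(\<lambda>x. complex_of_real (C * (norm (\<Sum>k\<in>freqs N. a k * torus_char k x))^2)) \<in> trig_poly (\<lambda>j. 2 * N j)"
proof -
  define F where "F = freqs N"
  define F2 where "F2 = freqs (\<lambda>j. 2 * N j)"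
  define c where "c n = complex_of_real C *
    (\<Sum>k\<in>F. \<Sum>l\<in>F. if (\<lambda>j. k j - l j) = n then a k * cnj (a l) else 0)" for n
  have "complex_of_real (C * (norm (\<Sum>k\<in>F. a k * torus_char k x))^2) = (\<Sum>n\<in>F2. c n * torus_char n x)" for x
  proof -
    let ?T = "\<lambda>k l n. if (\<lambda>j. k j - l j) = n then complex_of_real C * (a k * cnj (a l) * torus_char n x) else 0"
    have "(\<Sum>n\<in>F2. c n * torus_char n x) = (\<Sum>n\<in>F2. \<Sum>k\<in>F. \<Sum>l\<in>F. ?T k l n)"
      unfolding c_def sum_distrib_left sum_distrib_right by (intro sum.cong refl) simp
    also have "\<dots> = (\<Sum>k\<in>F. \<Sum>l\<in>F. \<Sum>n\<in>F2. ?T k l n)"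
      by (subst sum.swap) (rule sum.cong[OF refl], rule sum.swap)
    also have "\<dots> = (\<Sum>k\<in>F. \<Sum>l\<in>F. complex_of_real C * (a k * cnj (a l) * torus_char (\<lambda>j. k j - l j) x))"
    proof (intro sum.cong refl)
      fix k l assume "k \<in> F" "l \<in> F"
      then have "(\<lambda>j. k j - l j) \<in> F2" by (simp add: F_def F2_def diff_mem_freqs_double)
      then show "(\<Sum>n\<in>F2. ?T k l n) = complex_of_real C * (a k * cnj (a l) * torus_char (\<lambda>j. k j - l j) x)"
        by (simp add: F2_def)
    qed
    also have "\<dots> = complex_of_real C * (\<Sum>k\<in>F. \<Sum>l\<in>F. a k * cnj (a l) * torus_char (\<lambda>j. k j - l j) x)"
      by (simp add: sum_distrib_left)
    also have "\<dots> = complex_of_real C * complex_of_real ((norm (\<Sum>k\<in>F. a k * torus_char k x))^2)"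
      by (simp only: cmod_sum_torus_char_squared)
    finally show ?thesis by simp
  qed
  then show ?thesis
    unfolding trig_poly_def F_def F2_def torus_char_def by (intro CollectI exI[of _ c]) (simp add: fun_eq_iff)
qed

lemma integral_sum_squares_orthonormal:
  assumes "finite F" "finite U" "orthonormal_on F U"
  shows "(\<integral>x. (\<Sum>u\<in>U. (norm (\<Sum>k\<in>F. u k * torus_char k x))^2) \<partial>(torus_measure :: (real^'d::finite) measure))
    = real (card U)"
proof -
  have "(\<Sum>k\<in>F. (norm (u k))^2) = 1" if "u \<in> U" for u
  proof -
    have "cinner_on F u u = 1" using assms(3) that by (simp add: orthonormal_on_def)
    then show ?thesis by (simp only: cinner_on_self of_real_eq_1_iff)
  qed
  then show ?thesis
    by (simp add: Bochner_Integration.integral_sum integrable_torus_char_sum_squared parseval_torus[OF assms(1)])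
qed

lemma exists_in_torus_le_integral:
  fixes f :: "real^'d::finite \<Rightarrow> real"
  assumes "integrable torus_measure f"
  obtains x where "x \<in> torus" "f x \<le> (\<integral>x. f x \<partial>torus_measure)"
proof (rule ccontr)
  assume "\<not> thesis"
  with that have gt: "\<And>x. x \<in> torus \<Longrightarrow> (\<integral>x. f x \<partial>torus_measure) < f x" by force
  have "AE x in torus_measure. (\<integral>x. f x \<partial>torus_measure) < f x"
    using AE_torus_measure_in_torus by eventually_elim (use gt in auto)
  then have "(\<integral>x. (\<integral>x. f x \<partial>torus_measure) \<partial>(torus_measure :: (real^'d) measure)) < (\<integral>x. f x \<partial>torus_measure)"
    by (intro torus.integral_less_AE_space assms) auto
  then show False by simp
qed

lemma exists_trig_poly_vanishing_peaked:
  fixes N :: "'d::finite \<Rightarrow> nat" and \<xi> :: "(real^'d) list"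
  assumes "real (length \<xi>) \<le> real (vartheta N) / 2"
  obtains a x0 where "x0 \<in> torus" "\<forall>y\<in>set \<xi>. (\<Sum>k\<in>freqs N. a k * torus_char k y) = 0"
    "(\<Sum>k\<in>freqs N. a k * torus_char k x0) = complex_of_real (\<Sum>k\<in>freqs N. (norm (a k))^2)"
    "real (vartheta N) / 2 \<le> (\<Sum>k\<in>freqs N. (norm (a k))^2)"
proof -
  define F where "F = freqs N"
  define w where "w x = (\<lambda>k. cnj (torus_char k x))" for x :: "real^'d"
  have eval: "cinner_on F a (w x) = (\<Sum>k\<in>F. a k * torus_char k x)" for a x
    by (simp add: cinner_on_def w_def)
  have "finite F" by (simp add: F_def)
  obtain U where U: "finite U" "card U \<le> length (map w \<xi>)" "orthonormal_on F U"
    "\<And>a. \<forall>u\<in>U. cinner_on F a u = 0 \<Longrightarrow> \<forall>c\<in>set (map w \<xi>). cinner_on F a c = 0"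
    using gram_schmidt_cinner_on[OF \<open>finite F\<close>, where cs="map w \<xi>"] by blast
  define S where "S x = (\<Sum>u\<in>U. (norm (\<Sum>k\<in>F. u k * torus_char k x))^2)" for x :: "real^'d"
  obtain x0 where x0: "x0 \<in> torus" "S x0 \<le> real (card U)"
  proof -
    have "integrable torus_measure S"
      unfolding S_def by (simp add: integrable_torus_char_sum_squared)
    then obtain x0 where "x0 \<in> torus" "S x0 \<le> (\<integral>x. S x \<partial>torus_measure)"
      by (rule exists_in_torus_le_integral)
    moreover have "(\<integral>x. S x \<partial>torus_measure) = real (card U)"
      unfolding S_def by (rule integral_sum_squares_orthonormal[OF \<open>finite F\<close> U(1,3)])
    ultimately show thesis using that by simp
  qed
  define a where "a = (\<lambda>k. w x0 k - (\<Sum>u\<in>U. cinner_on F (w x0) u * u k))"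
  have "(\<Sum>u\<in>U. cinner_on F (w x0) u * cnj (cinner_on F (w x0) u)) = complex_of_real (S x0)"
    unfolding S_def of_real_sum
    by (intro sum.cong refl) (simp only: complex_norm_square cinner_on_commute[of F "w x0"] eval complex_cnj_cnj mult.commute)
  moreover have "cinner_on F (w x0) (w x0) = of_nat (card F)"
    by (simp add: cinner_on_self w_def)
  ultimately have aw: "cinner_on F a (w x0) = complex_of_real (real (card F) - S x0)"
    using cinner_on_residual(2)[OF U(1,3), of "w x0"] by (simp add: a_def)
  then have norm_a: "(\<Sum>k\<in>F. (norm (a k))^2) = real (card F) - S x0"
    using cinner_on_residual(1)[OF U(1,3), of "w x0"] by (simp only: a_def cinner_on_self of_real_eq_iff)
  have value_x0: "(\<Sum>k\<in>F. a k * torus_char k x0) = complex_of_real (\<Sum>k\<in>F. (norm (a k))^2)"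
    using aw norm_a by (simp only: eval)
  have orth: "cinner_on F a u = 0" if "u \<in> U" for u
    unfolding a_def by (rule cinner_on_residual_orthogonal[OF U(1,3) that])
  show thesis
  proof (rule that[OF x0(1) _ value_x0[unfolded F_def]])
    show "\<forall>y\<in>set \<xi>. (\<Sum>k\<in>freqs N. a k * torus_char k y) = 0"
      using U(4)[of a] orth eval by (auto simp: F_def)
    show "real (vartheta N) / 2 \<le> (\<Sum>k\<in>freqs N. (norm (a k))^2)"
      using norm_a x0(2) U(2) assms by (simp add: F_def card_freqs)
  qed
qed

section \<open>A box around the peak\<close>

lemma norm_cis_diff_le: "norm (cis a - cis b) \<le> \<bar>a - b\<bar>"
proof -
  define t where "t = a - b"
  have "cis a - cis b = cis b * (exp (\<i> * of_real t) - 1)"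
    by (simp add: t_def cis_conv_exp algebra_simps flip: exp_add)
  then have "norm (cis a - cis b) = norm (exp (\<i> * of_real t) - 1)"
    by (simp only: norm_mult norm_cis mult_1)
  also have "\<dots> = 2 * \<bar>sin (t / 2)\<bar>"
    by (rule dist_exp_i_1)
  also have "\<dots> \<le> \<bar>t\<bar>"
    using abs_sin_x_le_abs_x[of "t / 2"] by simp
  finally show ?thesis by (simp add: t_def)
qed

lemma norm_torus_char_diff_le:
  "norm (torus_char k x - torus_char k y) \<le> (\<Sum>j\<in>UNIV. \<bar>of_int (k j)\<bar> * \<bar>x$j - y$j\<bar>)"
proof -
  have "norm (torus_char k x - torus_char k y) \<le>
      \<bar>(\<Sum>j\<in>UNIV. of_int (k j) * x$j) - (\<Sum>j\<in>UNIV. of_int (k j) * y$j)\<bar>"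
    unfolding torus_char_def by (rule norm_cis_diff_le)
  also have "\<dots> = \<bar>\<Sum>j\<in>UNIV. of_int (k j) * (x$j - y$j)\<bar>"
    by (simp add: sum_subtractf[symmetric] algebra_simps)
  also have "\<dots> \<le> (\<Sum>j\<in>UNIV. \<bar>of_int (k j)\<bar> * \<bar>x$j - y$j\<bar>)"
    by (rule order_trans[OF sum_abs]) (simp add: abs_mult)
  finally show ?thesis .
qed

lemma sum_norm_freqs_squared_le:
  "(\<Sum>k\<in>freqs N. norm (a k))^2 \<le> real (vartheta N) * (\<Sum>k\<in>freqs N. (norm (a k))^2)"
  using sum_squared_le_sum_of_squares[of "\<lambda>k. norm (a k)" "freqs N"] by (simp add: card_freqs mult.commute)

lemma exists_torus_box:
  fixes x0 :: "real^'d::finite"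
  assumes x0: "x0 \<in> torus" and \<delta>: "\<And>j. 0 < \<delta> j" "\<And>j. \<delta> j \<le> 1"
  obtains E where "E \<in> sets borel" "measure torus_measure E = (\<Prod>j\<in>UNIV. \<delta> j) / (2*pi)^CARD('d)"
    "\<And>x j. x \<in> E \<Longrightarrow> \<bar>x$j - x0$j\<bar> \<le> \<delta> j"
proof -
  \<comment> \<open>a cube of side \<open>\<delta> j\<close> starting at \<open>x0\<close>, shifted back where it would leave \<open>[0, 2*pi)\<close>\<close>
  define lo where "lo = (\<chi> j. if x0$j + \<delta> j < 2*pi then x0$j else x0$j - \<delta> j)"
  define hi where "hi = (\<chi> j. lo$j + \<delta> j)"
  define E where "E = cbox lo hi"
  have in_E: "lo$j \<le> x$j \<and> x$j \<le> lo$j + \<delta> j" if "x \<in> E" for x j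
    using that by (auto simp: E_def hi_def mem_box_cart)
  have "E \<subseteq> torus"
  proof
    fix x assume "x \<in> E"
    have "0 \<le> x$j \<and> x$j < 2*pi" for j
    proof -
      have "0 \<le> x0$j" "x0$j < 2*pi" using x0 by (auto simp: torus_def)
      then show ?thesis
        using in_E[OF \<open>x \<in> E\<close>, of j] \<delta>[of j] pi_gt3 by (auto simp: lo_def split: if_splits)
    qed
    then show "x \<in> torus" by (simp add: torus_def)
  qed
  have prod_pos: "0 < (\<Prod>j\<in>UNIV. \<delta> j)" by (rule prod_pos) (use \<delta> in auto)
  have "emeasure torus_measure E = emeasure lborel E / ennreal ((2*pi)^CARD('d))"
    using \<open>E \<subseteq> torus\<close> by (simp add: emeasure_torus_measure E_def Int_absorb1)
  also have "emeasure lborel E = ennreal (\<Prod>j\<in>UNIV. \<delta> j)"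
    unfolding E_def using \<delta> by (subst emeasure_lborel_cbox_cart) (auto simp: hi_def less_imp_le)
  also have "ennreal (\<Prod>j\<in>UNIV. \<delta> j) / ennreal ((2*pi)^CARD('d)) = ennreal ((\<Prod>j\<in>UNIV. \<delta> j) / (2*pi)^CARD('d))"
    using prod_pos by (intro divide_ennreal) auto
  finally have "emeasure torus_measure E = ennreal ((\<Prod>j\<in>UNIV. \<delta> j) / (2*pi)^CARD('d))" .
  then have "measure torus_measure E = (\<Prod>j\<in>UNIV. \<delta> j) / (2*pi)^CARD('d)"
    using prod_pos by (simp add: measure_def)
  moreover have "\<bar>x$j - x0$j\<bar> \<le> \<delta> j" if "x \<in> E" for x j
    using in_E[OF that, of j] by (auto simp: lo_def split: if_splits)
  ultimately show thesis
    by (intro that[of E]) (auto simp: E_def)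
qed

text \<open>Chosen so that no character of frequency in \<open>freqs N\<close> varies by more than \<open>1/8\<close> across a box
  with these side lengths.\<close>
definition box_side :: "('d::finite \<Rightarrow> nat) \<Rightarrow> 'd \<Rightarrow> real" where
  "box_side N j = 1 / (8 * CARD('d) * (2 * real (N j) + 1))"

lemma box_side_bounds:
  fixes N :: "'d::finite \<Rightarrow> nat"
  shows "0 < box_side N j" "box_side N j \<le> 1"
proof -
  have "1 \<le> real CARD('d)" by simp
  then have "1 \<le> 8 * real CARD('d)" by linarith
  then have "1 \<le> 8 * real CARD('d) * (2 * real (N j) + 1)"
    using mult_mono[of 1 "8 * real CARD('d)" 1 "2 * real (N j) + 1"] by simp
  then show "0 < box_side N j" "box_side N j \<le> 1" by (simp_all add: box_side_def)
qed

lemma prod_box_side: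
  fixes N :: "'d::finite \<Rightarrow> nat"
  shows "(\<Prod>j\<in>UNIV. box_side N j) = 1 / ((8 * real CARD('d))^CARD('d) * real (vartheta N))"
proof -
  have "(\<Prod>j\<in>UNIV. box_side N j) = 1 / (\<Prod>j\<in>UNIV. 8 * real CARD('d) * (2 * real (N j) + 1))"
    by (simp add: box_side_def prod_dividef)
  also have "(\<Prod>j\<in>UNIV. 8 * real CARD('d) * (2 * real (N j) + 1)) = (8 * real CARD('d))^CARD('d) * real (vartheta N)"
    by (simp add: vartheta_def prod.distrib of_nat_prod add.commute)
  finally show ?thesis .
qed

lemma norm_torus_char_diff_le_box_side:
  fixes x y :: "real^'d::finite" and N :: "'d \<Rightarrow> nat"
  assumes "k \<in> freqs N" and near: "\<And>j. \<bar>x$j - y$j\<bar> \<le> box_side N j"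
  shows "norm (torus_char k x - torus_char k y) \<le> 1/8"
proof -
  have "\<bar>of_int (k j)\<bar> * \<bar>x$j - y$j\<bar> \<le> 1 / (8 * CARD('d))" for j
  proof -
    have "\<bar>k j\<bar> \<le> int (N j)" using \<open>k \<in> freqs N\<close> by (simp add: freqs_def)
    then have "\<bar>of_int (k j)\<bar> \<le> real (N j)"
      by (metis of_int_abs of_int_le_iff of_int_of_nat_eq)
    then have "\<bar>of_int (k j)\<bar> * \<bar>x$j - y$j\<bar> \<le> (2 * real (N j) + 1) * box_side N j"
      using near[of j] by (intro mult_mono) auto
    also have "\<dots> = 1 / (8 * CARD('d))" by (simp add: box_side_def)
    finally show ?thesis .
  qed
  then have "(\<Sum>j\<in>UNIV. \<bar>of_int (k j)\<bar> * \<bar>x$j - y$j\<bar>) \<le> (\<Sum>j\<in>(UNIV::'d set). 1 / (8 * CARD('d)))"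
    by (rule sum_mono)
  then show ?thesis by (intro order_trans[OF norm_torus_char_diff_le]) simp
qed

lemma sum_norm_freqs_le:
  assumes "real (vartheta N) \<le> 2 * (\<Sum>k\<in>freqs N. (norm (a k))^2)"
  shows "(\<Sum>k\<in>freqs N. norm (a k)) \<le> 2 * (\<Sum>k\<in>freqs N. (norm (a k))^2)"
proof (rule power2_le_imp_le)
  define A where "A = (\<Sum>k\<in>freqs N. (norm (a k))^2)"
  have "0 \<le> A" by (simp add: A_def sum_nonneg)
  have "(\<Sum>k\<in>freqs N. norm (a k))^2 \<le> real (vartheta N) * A"
    unfolding A_def by (rule sum_norm_freqs_squared_le)
  also have "\<dots> \<le> (2 * A) * A"
    using assms \<open>0 \<le> A\<close> by (intro mult_right_mono) (simp_all add: A_def)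
  also have "\<dots> \<le> (2 * A)^2"
    using \<open>0 \<le> A\<close> by (simp add: power2_eq_square)
  finally show "(\<Sum>k\<in>freqs N. norm (a k))^2 \<le> (2 * (\<Sum>k\<in>freqs N. (norm (a k))^2))^2"
    by (simp add: A_def)
qed (simp add: sum_nonneg)

lemma exists_box_trig_poly_large:
  fixes a :: "('d::finite \<Rightarrow> int) \<Rightarrow> complex" and N :: "'d \<Rightarrow> nat" and x0 :: "real^'d"
  defines "g \<equiv> \<lambda>x. \<Sum>k\<in>freqs N. a k * torus_char k x"
  defines "A \<equiv> \<Sum>k\<in>freqs N. (norm (a k))^2"
  assumes x0: "x0 \<in> torus" and peak: "g x0 = complex_of_real A" and V: "real (vartheta N) \<le> 2 * A"
  obtains E where "E \<in> sets borel"
    "1 / ((16*pi*CARD('d))^CARD('d) * real (vartheta N)) \<le> measure torus_measure E"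
    "\<And>x. x \<in> E \<Longrightarrow> A/2 \<le> norm (g x)"
proof -
  obtain E where E: "E \<in> sets borel" "measure torus_measure E = (\<Prod>j\<in>UNIV. box_side N j) / (2*pi)^CARD('d)"
    and near: "\<And>x j. x \<in> E \<Longrightarrow> \<bar>x$j - x0$j\<bar> \<le> box_side N j"
    using exists_torus_box[of x0 "box_side N", OF x0 box_side_bounds] by blast
  have "measure torus_measure E = 1 / ((8 * real CARD('d))^CARD('d) * (2*pi)^CARD('d) * real (vartheta N))"
    using E(2) by (simp add: prod_box_side mult_ac)
  also have "(8 * real CARD('d))^CARD('d) * (2*pi)^CARD('d) = (8 * real CARD('d) * (2*pi))^CARD('d)"
    by (rule power_mult_distrib[symmetric])
  also have "8 * real CARD('d) * (2*pi) = 16*pi*CARD('d)"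
    by simp
  finally have measure_E: "measure torus_measure E = 1 / ((16*pi*CARD('d))^CARD('d) * real (vartheta N))" .
  have "A/2 \<le> norm (g x)" if "x \<in> E" for x
  proof -
    have "norm (g x - g x0) \<le> (\<Sum>k\<in>freqs N. norm (a k) * (1/8))"
      unfolding g_def sum_subtractf[symmetric] right_diff_distrib[symmetric]
    proof (rule order_trans[OF norm_sum], rule sum_mono)
      fix k assume "k \<in> freqs N"
      then show "norm (a k * (torus_char k x - torus_char k x0)) \<le> norm (a k) * (1/8)"
        unfolding norm_mult using near[OF that]
        by (intro mult_left_mono norm_torus_char_diff_le_box_side) auto
    qed
    also have "\<dots> = (\<Sum>k\<in>freqs N. norm (a k)) / 8"
      by (simp add: sum_divide_distrib)
    also have "\<dots> \<le> A/2"
      using sum_norm_freqs_le[of N a] V sum_nonneg[of "freqs N" "\<lambda>k. (norm (a k))^2"]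
      unfolding A_def by simp
    finally have "norm (g x - g x0) \<le> A/2" .
    moreover have "0 \<le> A" by (simp add: A_def sum_nonneg)
    ultimately show ?thesis
      using peak norm_triangle_ineq2[of "g x0" "g x"] by (simp add: norm_minus_commute)
  qed
  then show thesis using E(1) measure_E by (intro that) auto
qed

section \<open>L_p estimates on the torus\<close>

lemma recip_bounds: "1 \<le> q \<Longrightarrow> 0 \<le> recip q \<and> recip q \<le> 1"
  by (cases q) (auto simp: recip_def)

lemma real_of_ereal_ge_1: "1 \<le> q \<Longrightarrow> q \<noteq> \<infinity> \<Longrightarrow> 1 \<le> real_of_ereal q"
  by (cases q) auto

lemma Lp_norm_le_interpolation:
  fixes f :: "real^'d::finite \<Rightarrow> complex" and q :: ereal
  assumes q: "1 \<le> q" and [measurable]: "f \<in> borel_measurable borel"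
    and bound: "\<And>x. norm (f x) \<le> B" and "0 < B" and "0 < I"
    and L1: "(\<integral>x. norm (f x) \<partial>torus_measure) \<le> I"
  shows "Lp_norm q f \<le> ereal (B powr (1 - recip q) * I powr recip q)"
proof (cases "q = \<infinity>")
  case True
  have "esssup torus_measure (\<lambda>x. ereal (norm (f x))) \<le> ereal B"
    by (rule esssup_I) (auto simp: bound)
  then show ?thesis using True \<open>0 < B\<close> \<open>0 < I\<close> by (simp add: Lp_norm_def recip_def)
next
  case False
  define r where "r = real_of_ereal q"
  have r: "1 \<le> r" "recip q = 1 / r"
    using real_of_ereal_ge_1[OF q False] False by (simp_all add: r_def recip_def)
  have pointwise: "ennreal (norm (f x) powr r) \<le> ennreal (B powr (r - 1) * norm (f x))" for x
  proof (cases "norm (f x) = 0")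
    case False
    then have "norm (f x) powr r = norm (f x) powr (r - 1) * norm (f x)"
      by (simp add: powr_diff)
    also have "\<dots> \<le> B powr (r - 1) * norm (f x)"
      using r bound[of x] by (intro mult_right_mono powr_mono2) auto
    finally show ?thesis by (rule ennreal_leI)
  qed simp
  have "integrable torus_measure (\<lambda>x. B powr (r - 1) * norm (f x))"
    by (rule torus.integrable_const_bound[where B="B powr (r - 1) * B"]) (auto intro!: mult_left_mono bound)
  then have "(\<integral>\<^sup>+ x. ennreal (B powr (r - 1) * norm (f x)) \<partial>torus_measure) =
      ennreal (B powr (r - 1) * (\<integral>x. norm (f x) \<partial>torus_measure))"
    by (subst nn_integral_eq_integral) auto
  also have "\<dots> \<le> ennreal (B powr (r - 1) * I)"
    using L1 by (intro ennreal_leI mult_left_mono) auto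
  finally have I_le: "(\<integral>\<^sup>+ x. ennreal (norm (f x) powr r) \<partial>torus_measure) \<le> ennreal (B powr (r - 1) * I)"
    by (meson nn_integral_mono pointwise order_trans)
  then have "(\<integral>\<^sup>+ x. ennreal (norm (f x) powr r) \<partial>torus_measure) \<noteq> \<infinity>"
    by (auto simp: top_unique)
  moreover have "enn2real (\<integral>\<^sup>+ x. ennreal (norm (f x) powr r) \<partial>torus_measure) powr (1 / r)
      \<le> (B powr (r - 1) * I) powr (1 / r)"
    using I_le \<open>0 < B\<close> \<open>0 < I\<close> r by (intro powr_mono2 enn2real_leI) auto
  moreover have "(B powr (r - 1) * I) powr (1 / r) = B powr (1 - recip q) * I powr recip q"
    using \<open>0 < B\<close> \<open>0 < I\<close> r unfolding r(2) by (simp add: powr_mult powr_powr diff_divide_distrib)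
  ultimately show ?thesis
    using False unfolding Lp_norm_def r_def by (simp add: Let_def)
qed

lemma esssup_ge_on_set:
  fixes f :: "'a \<Rightarrow> real"
  assumes [measurable]: "E \<in> sets M" and "emeasure M E \<noteq> 0" and on_E: "\<And>x. x \<in> E \<Longrightarrow> \<tau> \<le> f x"
  shows "ereal \<tau> \<le> esssup M (\<lambda>x. ereal (f x))"
proof (rule ccontr)
  assume "\<not> ?thesis"
  then have less: "esssup M (\<lambda>x. ereal (f x)) < ereal \<tau>" by simp
  have "AE x in M. x \<notin> E"
    using esssup_AE[of "\<lambda>x. ereal (f x)" M]
  proof eventually_elim
    case (elim x)
    then have "ereal (f x) < ereal \<tau>" using less by (rule le_less_trans)
    then show ?case using on_E[of x] by auto
  qed
  then have "emeasure M {x\<in>space M. x \<in> E} = 0"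
    by (rule emeasure_eq_0_AE)
  then show False using assms(2) sets.sets_into_space[OF assms(1)] by (simp add: Int_absorb1 Collect_conj_eq)
qed

lemma Lp_norm_ge_on_set:
  fixes f :: "real^'d::finite \<Rightarrow> complex" and p :: ereal
  assumes p: "1 \<le> p" and [measurable]: "f \<in> borel_measurable borel" "E \<in> sets borel"
    and \<beta>: "0 < \<beta>" "\<beta> \<le> measure torus_measure E"
    and \<tau>: "0 < \<tau>" and on_E: "\<And>x. x \<in> E \<Longrightarrow> \<tau> \<le> norm (f x)"
  shows "ereal (\<tau> * \<beta> powr recip p) \<le> Lp_norm p f"
proof (cases "p = \<infinity>")
  case True
  have "ereal \<tau> \<le> esssup torus_measure (\<lambda>x. ereal (norm (f x)))"
    using \<beta> by (intro esssup_ge_on_set[of E _ \<tau>] on_E) (auto simp: torus.emeasure_eq_measure)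
  then show ?thesis using True \<beta> by (simp add: Lp_norm_def recip_def)
next
  case False
  define r where "r = real_of_ereal p"
  have r: "1 \<le> r" "recip p = 1 / r"
    using real_of_ereal_ge_1[OF p False] False by (simp_all add: r_def recip_def)
  define I where "I = (\<integral>\<^sup>+ x. ennreal (norm (f x) powr r) \<partial>torus_measure)"
  have "ennreal (\<tau> powr r * \<beta>) \<le> ennreal (\<tau> powr r) * emeasure torus_measure E"
    using \<beta> by (simp add: torus.emeasure_eq_measure flip: ennreal_mult) (intro ennreal_leI mult_left_mono, auto)
  also have "\<dots> = (\<integral>\<^sup>+ x. ennreal (\<tau> powr r) * indicator E x \<partial>torus_measure)"
    by (rule nn_integral_cmult_indicator[symmetric]) simp
  also have "\<dots> \<le> I"
    unfolding I_def
    using on_E \<tau> r by (intro nn_integral_mono) (auto split: split_indicator intro!: ennreal_leI powr_mono2)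
  finally have I_ge: "ennreal (\<tau> powr r * \<beta>) \<le> I" .
  show ?thesis
  proof (cases "I = \<infinity>")
    case True
    then show ?thesis using False unfolding Lp_norm_def I_def r_def by (simp add: Let_def)
  next
    case finite: False
    have "\<tau> powr r * \<beta> \<le> enn2real I"
      using enn2real_mono[OF I_ge] finite \<tau> \<beta> by (simp add: less_top)
    then have "(\<tau> powr r * \<beta>) powr (1 / r) \<le> enn2real I powr (1 / r)"
      using r \<tau> \<beta> by (intro powr_mono2) auto
    moreover have "(\<tau> powr r * \<beta>) powr (1 / r) = \<tau> * \<beta> powr recip p"
      using \<tau> \<beta> r by (simp add: powr_mult powr_powr)
    ultimately show ?thesis
      using False finite unfolding Lp_norm_def I_def r_def by (simp add: Let_def)
  qed
qed

section \<open>The fooling argument\<close>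

lemma recovery_error_ge_of_vanishing:
  fixes f :: "real^'d::finite \<Rightarrow> complex" and p :: ereal
  assumes p: "1 \<le> p" and in_F: "f \<in> F" "(\<lambda>x. - f x) \<in> F" and vanish: "\<forall>y\<in>set \<xi>. f y = 0"
    and [measurable]: "f \<in> borel_measurable borel" "M (map f \<xi>) \<in> borel_measurable borel" "E \<in> sets borel"
    and \<beta>: "0 < \<beta>" "2 * \<beta> \<le> measure torus_measure E"
    and \<tau>: "0 < \<tau>" and on_E: "\<And>x. x \<in> E \<Longrightarrow> \<tau> \<le> norm (f x)"
  shows "ereal (\<tau> * \<beta> powr recip p) \<le> (SUP f\<in>F. Lp_norm p (\<lambda>x. f x - M (map f \<xi>) x))"
proof -
  \<comment> \<open>\<open>f\<close> and \<open>-f\<close> have the same samples, so the method returns the same \<open>h\<close> for both\<close>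
  define h where "h = M (map f \<xi>)"
  have same_data: "map (\<lambda>x. - f x) \<xi> = map f \<xi>"
    using vanish by simp
  define E1 where "E1 = {x\<in>E. \<tau> \<le> norm (f x - h x)}"
  define E2 where "E2 = {x\<in>E. \<tau> \<le> norm (- f x - h x)}"
  have [measurable]: "E1 \<in> sets borel" "E2 \<in> sets borel"
    unfolding E1_def E2_def h_def by measurable
  have "E \<subseteq> E1 \<union> E2"
  proof
    fix x assume "x \<in> E"
    have "2 * norm (f x) \<le> norm (f x - h x) + norm (- f x - h x)"
      using norm_triangle_ineq4[of "f x - h x" "- f x - h x"] by (simp add: norm_mult)
    then show "x \<in> E1 \<union> E2" using on_E[OF \<open>x \<in> E\<close>] \<open>x \<in> E\<close> by (auto simp: E1_def E2_def)
  qed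
  then have "measure torus_measure E \<le> measure torus_measure E1 + measure torus_measure E2"
    by (intro order_trans[OF torus.finite_measure_mono measure_subadditive])
       (auto simp: torus.emeasure_eq_measure)
  then have "\<beta> \<le> measure torus_measure E1 \<or> \<beta> \<le> measure torus_measure E2"
    using \<beta> by linarith
  then show ?thesis
  proof
    assume "\<beta> \<le> measure torus_measure E1"
    then have "ereal (\<tau> * \<beta> powr recip p) \<le> Lp_norm p (\<lambda>x. f x - M (map f \<xi>) x)"
      by (intro Lp_norm_ge_on_set[OF p _ _ \<beta>(1) _ \<tau>]) (auto simp: E1_def h_def)
    then show ?thesis by (rule order_trans) (rule SUP_upper[OF in_F(1)])
  next
    assume "\<beta> \<le> measure torus_measure E2"
    then have "ereal (\<tau> * \<beta> powr recip p) \<le> Lp_norm p (\<lambda>x. - f x - M (map (\<lambda>x. - f x) \<xi>) x)"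
      unfolding same_data by (intro Lp_norm_ge_on_set[OF p _ _ \<beta>(1) _ \<tau>]) (auto simp: E2_def h_def)
    then show ?thesis by (rule order_trans) (rule SUP_upper[OF in_F(2)])
  qed
qed

lemma normalized_square_in_trig_poly_ball:
  fixes a :: "('d::finite \<Rightarrow> int) \<Rightarrow> complex" and N :: "'d \<Rightarrow> nat" and q :: ereal
  defines "A \<equiv> \<Sum>k\<in>freqs N. (norm (a k))^2"
  assumes q: "1 \<le> q" and "0 < A" and c: "\<bar>c\<bar> = 1 / (real (vartheta N) powr (1 - recip q) * A)"
  shows "(\<lambda>x. complex_of_real (c * (norm (\<Sum>k\<in>freqs N. a k * torus_char k x))^2))
    \<in> trig_poly_ball (\<lambda>j. 2 * N j) q"
proof -
  define V where "V = real (vartheta N)"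
  have "1 \<le> V" using vartheta_pos[of N] by (simp add: V_def)
  define f where "f = (\<lambda>x::real^'d. complex_of_real (c * (norm (\<Sum>k\<in>freqs N. a k * torus_char k x))^2))"
  have [measurable]: "f \<in> borel_measurable borel"
    unfolding f_def by measurable
  have norm_f: "norm (f x) = \<bar>c\<bar> * (norm (\<Sum>k\<in>freqs N. a k * torus_char k x))^2" for x
    unfolding f_def norm_of_real by (simp add: abs_mult)
  have "norm (f x) \<le> V powr recip q" for x
  proof -
    have "(norm (\<Sum>k\<in>freqs N. a k * torus_char k x))^2 \<le> (\<Sum>k\<in>freqs N. norm (a k))^2"
      by (intro power_mono norm_sum_torus_char_le) auto
    also have "\<dots> \<le> V * A"
      unfolding V_def A_def by (rule sum_norm_freqs_squared_le)
    finally have "norm (f x) \<le> \<bar>c\<bar> * (V * A)"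
      unfolding norm_f by (intro mult_left_mono) auto
    also have "\<bar>c\<bar> * (V * A) = V powr recip q"
      using \<open>1 \<le> V\<close> \<open>0 < A\<close> by (simp add: c V_def powr_diff)
    finally show ?thesis .
  qed
  moreover have "(\<integral>x. norm (f x) \<partial>torus_measure) = V powr (recip q - 1)"
    using \<open>1 \<le> V\<close> \<open>0 < A\<close>
    by (simp add: norm_f parseval_torus A_def[symmetric] c V_def powr_diff)
  ultimately have "Lp_norm q f \<le> ereal ((V powr recip q) powr (1 - recip q) * (V powr (recip q - 1)) powr recip q)"
    using \<open>1 \<le> V\<close> by (intro Lp_norm_le_interpolation[OF q]) auto
  also have "(V powr recip q) powr (1 - recip q) * (V powr (recip q - 1)) powr recip q = 1"
    using \<open>1 \<le> V\<close> by (simp add: powr_powr flip: powr_add) (simp add: algebra_simps)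
  finally have "Lp_norm q f \<le> 1" by (simp add: one_ereal_def)
  then show ?thesis
    using scaled_norm_square_in_trig_poly[of c a N] unfolding trig_poly_ball_def f_def[symmetric] by simp
qed

lemma peak_scale_ge:
  fixes V A r :: real
  assumes V: "1 \<le> V" and A: "V / 2 \<le> A"
  shows "V powr r / 8 \<le> (A/2)^2 / (V powr (1 - r) * A)"
proof -
  define W where "W = V powr (1 - r)"
  have "0 < W" "0 < A" using V A by (simp_all add: W_def)
  have "V / W = V powr r"
    using V by (simp add: W_def powr_diff)
  then have "V powr r / 8 = (V / 2) / (4 * W)"
    using \<open>0 < W\<close> by (simp add: field_simps)
  also have "\<dots> \<le> A / (4 * W)"
    using A \<open>0 < W\<close> by (intro divide_right_mono) auto
  also have "\<dots> = (A/2)^2 / (W * A)"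
    using \<open>0 < A\<close> by (simp add: power2_eq_square field_simps)
  finally show ?thesis by (simp add: W_def)
qed

lemma exists_fooling_function:
  fixes N :: "'d::finite \<Rightarrow> nat" and \<xi> :: "(real^'d) list" and q :: ereal
  assumes q: "1 \<le> q" and nodes: "real (length \<xi>) \<le> real (vartheta N) / 2"
  obtains f E where "f \<in> trig_poly_ball (\<lambda>j. 2 * N j) q" "(\<lambda>x. - f x) \<in> trig_poly_ball (\<lambda>j. 2 * N j) q"
    "\<forall>y\<in>set \<xi>. f y = 0" "f \<in> borel_measurable borel" "E \<in> sets borel"
    "1 / ((16*pi*CARD('d))^CARD('d) * real (vartheta N)) \<le> measure torus_measure E"
    "\<And>x. x \<in> E \<Longrightarrow> real (vartheta N) powr recip q / 8 \<le> norm (f x)"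
proof -
  define V where "V = real (vartheta N)"
  have "1 \<le> V" using vartheta_pos[of N] by (simp add: V_def)
  obtain a x0 where x0: "x0 \<in> torus" and vanish: "\<forall>y\<in>set \<xi>. (\<Sum>k\<in>freqs N. a k * torus_char k y) = 0"
    and peak: "(\<Sum>k\<in>freqs N. a k * torus_char k x0) = complex_of_real (\<Sum>k\<in>freqs N. (norm (a k))^2)"
    and large: "real (vartheta N) / 2 \<le> (\<Sum>k\<in>freqs N. (norm (a k))^2)"
    using exists_trig_poly_vanishing_peaked[OF nodes] by blast
  define g where "g x = (\<Sum>k\<in>freqs N. a k * torus_char k x)" for x
  define A where "A = (\<Sum>k\<in>freqs N. (norm (a k))^2)"
  have "0 < A" using large \<open>1 \<le> V\<close> by (simp add: A_def V_def)
  obtain E where "E \<in> sets borel"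
    and measure_E: "1 / ((16*pi*CARD('d))^CARD('d) * real (vartheta N)) \<le> measure torus_measure E"
    and on_E: "\<And>x. x \<in> E \<Longrightarrow> (\<Sum>k\<in>freqs N. (norm (a k))^2) / 2 \<le> norm (\<Sum>k\<in>freqs N. a k * torus_char k x)"
    using exists_box_trig_poly_large[OF x0 peak] large by auto
  define U where "U = V powr (1 - recip q) * A"
  have "0 < U" using \<open>0 < A\<close> \<open>1 \<le> V\<close> by (simp add: U_def)
  define f where "f = (\<lambda>x. complex_of_real (1 / U * (norm (g x))^2))"
  have minus_f: "(\<lambda>x. - f x) = (\<lambda>x. complex_of_real (- (1 / U) * (norm (g x))^2))"
    by (simp add: f_def)
  have c: "\<bar>1 / U\<bar> = 1 / (real (vartheta N) powr (1 - recip q) * (\<Sum>k\<in>freqs N. (norm (a k))^2))"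
    "\<bar>- (1 / U)\<bar> = 1 / (real (vartheta N) powr (1 - recip q) * (\<Sum>k\<in>freqs N. (norm (a k))^2))"
    using \<open>0 < U\<close> by (simp_all add: U_def V_def A_def)
  have "V powr recip q / 8 \<le> norm (f x)" if "x \<in> E" for x
  proof -
    have "V powr recip q / 8 \<le> (A/2)^2 / U"
      unfolding U_def using \<open>1 \<le> V\<close> large by (intro peak_scale_ge) (simp_all add: A_def V_def)
    also have "\<dots> \<le> (norm (g x))^2 / U"
      using on_E[OF that] \<open>0 < A\<close> \<open>0 < U\<close>
      by (intro divide_right_mono power_mono) (auto simp: A_def g_def)
    also have "\<dots> = norm (f x)"
      unfolding f_def norm_of_real using \<open>0 < U\<close> by simp
    finally show ?thesis .
  qed
  then show thesis
  proof (intro that[of f E])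
    show "f \<in> trig_poly_ball (\<lambda>j. 2 * N j) q"
      unfolding f_def g_def by (rule normalized_square_in_trig_poly_ball[OF q \<open>0 < A\<close>[unfolded A_def] c(1)])
    show "(\<lambda>x. - f x) \<in> trig_poly_ball (\<lambda>j. 2 * N j) q"
      unfolding minus_f g_def by (rule normalized_square_in_trig_poly_ball[OF q \<open>0 < A\<close>[unfolded A_def] c(2)])
    show "\<forall>y\<in>set \<xi>. f y = 0" using vanish by (simp add: f_def g_def)
    show "f \<in> borel_measurable borel" unfolding f_def g_def by measurable
  qed (use \<open>E \<in> sets borel\<close> measure_E in \<open>auto simp: V_def\<close>)
qed

lemma fooling_bound_ge:
  fixes V \<kappa> r s :: real
  assumes V: "1 \<le> V" and \<kappa>: "0 < \<kappa>" "\<kappa> \<le> 1" and r: "0 \<le> r" "r \<le> 1"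
  shows "\<kappa>/16 * V powr (s - r) \<le> V powr s / 8 * (\<kappa> / (2 * V)) powr r"
proof -
  have "(\<kappa>/2) powr 1 \<le> (\<kappa>/2) powr r"
    using \<kappa> r by (intro powr_mono') auto
  then have "\<kappa>/2 * V powr (- r) \<le> (\<kappa>/2) powr r * V powr (- r)"
    using \<kappa> by (intro mult_right_mono) simp_all
  also have "\<dots> = (\<kappa> / (2 * V)) powr r"
    using V \<kappa> by (simp add: powr_divide powr_minus_divide powr_mult field_simps)
  finally have factor: "\<kappa>/2 * V powr (- r) \<le> (\<kappa> / (2 * V)) powr r" .
  have "\<kappa>/16 * V powr (s - r) = V powr s / 8 * (\<kappa>/2 * V powr (- r))"
    by (simp add: powr_diff powr_minus_divide field_simps)
  also have "\<dots> \<le> V powr s / 8 * (\<kappa> / (2 * V)) powr r"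
    by (intro mult_left_mono factor) simp
  finally show ?thesis .
qed

lemma recovery_error_ge_fixed_nodes:
  fixes N :: "'d::finite \<Rightarrow> nat" and \<xi> :: "(real^'d) list" and p q :: ereal
  defines "\<kappa> \<equiv> 1 / (16*pi*CARD('d))^CARD('d)"
  assumes q: "1 \<le> q" and p: "1 \<le> p" and nodes: "real (length \<xi>) \<le> real (vartheta N) / 2"
    and M: "\<And>v. M v \<in> borel_measurable borel"
  shows "ereal (\<kappa>/16 * real (vartheta N) powr (recip q - recip p))
    \<le> (SUP f\<in>trig_poly_ball (\<lambda>j. 2 * N j) q. Lp_norm p (\<lambda>x. f x - M (map f \<xi>) x))"
proof -
  define V where "V = real (vartheta N)"
  have "1 \<le> V" using vartheta_pos[of N] by (simp add: V_def)
  have "0 < \<kappa>" "\<kappa> \<le> 1"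
    using pi_gt3 by (simp_all add: \<kappa>_def one_le_power mult_ge1_I)
  obtain f E where ball: "f \<in> trig_poly_ball (\<lambda>j. 2 * N j) q" "(\<lambda>x. - f x) \<in> trig_poly_ball (\<lambda>j. 2 * N j) q"
    and "\<forall>y\<in>set \<xi>. f y = 0" "f \<in> borel_measurable borel" "E \<in> sets borel"
    and "\<kappa> / V \<le> measure torus_measure E" "\<And>x. x \<in> E \<Longrightarrow> V powr recip q / 8 \<le> norm (f x)"
    using exists_fooling_function[OF q nodes] unfolding \<kappa>_def V_def by auto
  then have lower: "ereal (V powr recip q / 8 * (\<kappa> / (2 * V)) powr recip p)
      \<le> (SUP f\<in>trig_poly_ball (\<lambda>j. 2 * N j) q. Lp_norm p (\<lambda>x. f x - M (map f \<xi>) x))"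
    using \<open>1 \<le> V\<close> \<open>0 < \<kappa>\<close> M by (intro recovery_error_ge_of_vanishing[OF p ball]) simp_all
  have "\<kappa>/16 * V powr (recip q - recip p) \<le> V powr recip q / 8 * (\<kappa> / (2 * V)) powr recip p"
    using fooling_bound_ge[OF \<open>1 \<le> V\<close> \<open>0 < \<kappa>\<close> \<open>\<kappa> \<le> 1\<close>] recip_bounds[OF p] by simp
  then have "ereal (\<kappa>/16 * V powr (recip q - recip p)) \<le> ereal (V powr recip q / 8 * (\<kappa> / (2 * V)) powr recip p)"
    by simp
  also note lower
  finally show ?thesis by (simp only: V_def)
qed

theorem lemma4p1:
  "\<exists>c>0. \<forall>(p::ereal) (q::ereal) (N::'d::finite \<Rightarrow> nat) (m::nat).
     1 \<le> q \<longrightarrow> q \<le> p \<longrightarrow> 1 \<le> m \<longrightarrow> real m \<le> real (vartheta N) / 2 \<longrightarrow>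
     ereal (c * real (vartheta N) powr (recip q - recip p))
       \<le> optimal_recovery m (trig_poly_ball (\<lambda>j. 2 * N j) q :: (real^'d \<Rightarrow> complex) set) p"
proof (intro exI[of _ "1 / (16*pi*CARD('d))^CARD('d) / 16"] conjI allI impI)
  fix p q :: ereal and N :: "'d \<Rightarrow> nat" and m :: nat
  assume q: "1 \<le> q" and "q \<le> p" and m: "real m \<le> real (vartheta N) / 2"
  then have p: "1 \<le> p" by order
  show "ereal (1 / (16*pi*CARD('d))^CARD('d) / 16 * real (vartheta N) powr (recip q - recip p))
      \<le> optimal_recovery m (trig_poly_ball (\<lambda>j. 2 * N j) q) p"
    unfolding optimal_recovery_def
  proof (intro INF_greatest)
    fix \<xi> :: "(real^'d) list" and M :: "complex list \<Rightarrow> real^'d \<Rightarrow> complex"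
    assume "\<xi> \<in> {\<xi>. length \<xi> = m \<and> distinct \<xi> \<and> set \<xi> \<subseteq> torus}"
    then have nodes: "real (length \<xi>) \<le> real (vartheta N) / 2" using m by simp
    assume "M \<in> {M. \<forall>v. M v \<in> Lp_space p}"
    then have "M v \<in> borel_measurable borel" for v
      by (simp add: Lp_space_def measurable_cong_sets[OF sets_torus_measure refl])
    from recovery_error_ge_fixed_nodes[OF q p nodes this]
    show "ereal (1 / (16*pi*CARD('d))^CARD('d) / 16 * real (vartheta N) powr (recip q - recip p))
        \<le> (SUP f\<in>trig_poly_ball (\<lambda>j. 2 * N j) q. Lp_norm p (\<lambda>x. f x - M (map f \<xi>) x))" .
  qed
qed simp

end
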